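(* For any random vector $\mathbf{X}$ in $\mathbb{R}^n$, $$\mathsf{Var}(\vec{\mathbf{X}})\ge\mathsf{Var}(\|\mathbf{X}\|).$$ In particular, for $\mathbf{X}\sim\mathcal{N}(\mathbf{0}_n,\mathbf{I}_n)$: for every $n\ge 1$, $$\mathsf{Var}(\|\mathbf{X}\|)=n-2\left(\frac{\Gamma\left(\frac{n+1}{2}\right)}{\Gamma\left(\frac{n}{2}\right)}\right)^2,$$ and $n\mapsto\mathsf{Var}(\|\mathbf{X}\|)$ is monotonically increasing with $\lim_{n\to\infty}\mathsf{Var}(\|\mathbf{X}\|)=\frac12$.
   Context: $\vec{\mathbf{X}}$ is $\mathbf{X}$ with entries sorted in ascending order; for a random vector $\mathbf{V}$, $\mathsf{Var}(\mathbf{V})=\mathbb{E}\left[\|\mathbf{V}-\mathbb{E}[\mathbf{V}]\|^2\right]$, and for a scalar it is the usual variance; $\|\cdot\|$ is the Euclidean norm and $\Gamma$ is the gamma function. *)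

theory Defs
  imports "HOL-Probability.Probability"
begin

text \<open>Vectors of \<open>\<real>\<^sup>n\<close> are represented as functions \<open>nat \<Rightarrow> real\<close>; only the
  coordinates \<open>0..<n\<close> matter.\<close>

definition rvar :: "'a measure \<Rightarrow> ('a \<Rightarrow> real) \<Rightarrow> real" where
  "rvar M Y = (\<integral>\<omega>. (Y \<omega> - (\<integral>\<omega>'. Y \<omega>' \<partial>M))\<^sup>2 \<partial>M)"

definition vnorm :: "nat \<Rightarrow> (nat \<Rightarrow> real) \<Rightarrow> real" where
  "vnorm n x = sqrt (\<Sum>i<n. (x i)\<^sup>2)"

definition vvar :: "'a measure \<Rightarrow> nat \<Rightarrow> ('a \<Rightarrow> nat \<Rightarrow> real) \<Rightarrow> real" where
  "vvar M n V = (\<integral>\<omega>. (vnorm n (\<lambda>i. V \<omega> i - (\<integral>\<omega>'. V \<omega>' i \<partial>M)))\<^sup>2 \<partial>M)"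

definition sort_vec :: "nat \<Rightarrow> (nat \<Rightarrow> real) \<Rightarrow> (nat \<Rightarrow> real)" where
  "sort_vec n x = (\<lambda>i. if i < n then sort (map x [0..<n]) ! i else 0)"

definition std_gauss :: "nat \<Rightarrow> (nat \<Rightarrow> real) measure" where
  "std_gauss n = PiM {..<n} (\<lambda>_. density lborel std_normal_density)"

definition gauss_norm_var :: "nat \<Rightarrow> real" where
  "gauss_norm_var n = rvar (std_gauss n) (vnorm n)"

end

theory Submission
  imports Defs
begin

(*
  Write Var V = E |V|^2 - |E V|^2 for a random vector V and Var |V| = E |V|^2 - (E |V|)^2.
  Since |E V| <= E |V| (Cauchy-Schwarz), Var V >= Var |V|; sorting the entries changes
  neither |V| nor the measurability and integrability of the entries.

  For X ~ N(0, I_n), writing sqrt s = pi^(-1/2) * int_0^oo t^(-1/2) s exp(-t s) dt and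
  swapping the integrals reduces E |X| to a Beta-type integral, which gives
  E |X| = sqrt 2 * Gamma((n+1)/2) / Gamma(n/2), while E |X|^2 = n.

  With g n = (Gamma((n+1)/2) / Gamma(n/2))^2 we have g n * g (n+1) = n^2/4;
  log-convexity of Gamma gives g n <= n/2, and then the product identity gives
  (n-1)/2 <= g n.  The defect d n = g n - n/2 + 1/4, for which Var |X| = 1/2 - 2 d n,
  satisfies d (n+2) = ((n+1)/n)^2 d n - 1/(4 n^2).
  Iterating such recurrences backwards against the a-priori bound |d n| <= 1/4 shows
  0 <= d n <= 1/(8 n) and d (n+1) <= d n.
*)

section \<open>Sorting and the variance of the norm\<close>

lemma vnorm_eq_L2_set: "vnorm n x = L2_set x {..<n}"
  by (simp add: vnorm_def L2_set_def)

lemma vnorm_nonneg [simp]: "vnorm n x \<ge> 0"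
  by (simp add: vnorm_def sum_nonneg)

lemma vnorm_sq: "(vnorm n x)\<^sup>2 = (\<Sum>i<n. (x i)\<^sup>2)"
  by (simp add: vnorm_def sum_nonneg)

lemma component_sq_le_vnorm_sq: "i < n \<Longrightarrow> (x i)\<^sup>2 \<le> (vnorm n x)\<^sup>2"
  unfolding vnorm_sq by (rule member_le_sum) auto

lemma nth_insort:
  fixes x :: "'a :: linorder"
  assumes "sorted ys" "i \<le> length ys"
  shows "insort x ys ! i =
    (if i = 0 then (if ys = [] then x else min x (ys ! 0))
     else if i < length ys then max (ys ! (i - 1)) (min x (ys ! i))
     else max (ys ! (i - 1)) x)"
  using assms
proof (induction ys arbitrary: i)
  case Nil
  then show ?case
    by simp
next
  case (Cons y ys)
  have y_le: "\<And>k. k < length ys \<Longrightarrow> y \<le> ys ! k"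
    using Cons.prems(1) by (auto simp: nth_mem)
  show ?case
  proof (cases i)
    case 0
    then show ?thesis
      by (auto simp: min_def)
  next
    case (Suc j)
    have j: "j \<le> length ys"
      using Cons.prems(2) Suc by simp
    show ?thesis
    proof (cases "x \<le> y")
      case True
      have "(y # ys) ! j \<ge> y"
        using y_le j by (cases j) auto
      then show ?thesis
        using True Suc j y_le by (auto simp: min_def max_def)
    next
      case False
      have IH: "insort x ys ! j = (if j = 0 then (if ys = [] then x else min x (ys ! 0))
         else if j < length ys then max (ys ! (j - 1)) (min x (ys ! j))
         else max (ys ! (j - 1)) x)"
        using Cons.IH[of j] Cons.prems(1) j by simp
      show ?thesis
      proof (cases j)
        case 0
        then show ?thesis
          using False Suc IH y_le[of 0] by (auto simp: min_def max_def)
      next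
        case (Suc k)
        then show ?thesis
          using False \<open>i = Suc j\<close> IH by auto
      qed
    qed
  qed
qed

lemma borel_measurable_sort_nth:
  fixes F :: "'a \<Rightarrow> 'b \<Rightarrow> real"
  assumes "\<And>j. j \<in> set xs \<Longrightarrow> (\<lambda>\<omega>. F \<omega> j) \<in> borel_measurable M" "i < length xs"
  shows "(\<lambda>\<omega>. sort (map (F \<omega>) xs) ! i) \<in> borel_measurable M"
  using assms
proof (induction xs arbitrary: i)
  case Nil
  then show ?case
    by simp
next
  case (Cons a xs)
  have IH: "\<And>k. k < length xs \<Longrightarrow> (\<lambda>\<omega>. sort (map (F \<omega>) xs) ! k) \<in> borel_measurable M"
    using Cons by auto
  have [measurable]: "(\<lambda>\<omega>. F \<omega> a) \<in> borel_measurable M"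
    using Cons by auto
  have "sort (map (F \<omega>) (a # xs)) ! i =
    (if i = 0 then (if xs = [] then F \<omega> a else min (F \<omega> a) (sort (map (F \<omega>) xs) ! 0))
     else if i < length xs then max (sort (map (F \<omega>) xs) ! (i - 1)) (min (F \<omega> a) (sort (map (F \<omega>) xs) ! i))
     else max (sort (map (F \<omega>) xs) ! (i - 1)) (F \<omega> a))" for \<omega>
    using Cons.prems(2) by (simp add: nth_insort flip: length_0_conv)
  then show ?case
    using Cons.prems(2)
    by (cases "i = 0"; cases "xs = []"; cases "i < length xs")
      (auto intro!: borel_measurable_max borel_measurable_min IH)
qed

lemma borel_measurable_sort_vec:
  assumes "\<And>j. j < n \<Longrightarrow> (\<lambda>\<omega>. X \<omega> j) \<in> borel_measurable M"
  shows "(\<lambda>\<omega>. sort_vec n (X \<omega>) i) \<in> borel_measurable M"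
proof (cases "i < n")
  case True
  then have "(\<lambda>\<omega>. sort (map (X \<omega>) [0..<n]) ! i) \<in> borel_measurable M"
    using assms by (intro borel_measurable_sort_nth) auto
  then show ?thesis
    using True by (simp add: sort_vec_def)
qed (simp add: sort_vec_def)

lemma sum_sort_map_upt: "(\<Sum>i<n. g (sort (map x [0..<n]) ! i)) = (\<Sum>i<n. g (x i))"
proof -
  have "(\<Sum>i<n. g (sort (map x [0..<n]) ! i)) = sum_list (map g (sort (map x [0..<n])))"
    by (simp add: sum_list_sum_nth atLeast0LessThan)
  also have "\<dots> = sum_list (map g (map x [0..<n]))"
    by (metis mset_map mset_sort sum_mset_sum_list)
  also have "\<dots> = (\<Sum>i<n. g (x i))"
    by (simp add: sum_list_sum_nth atLeast0LessThan)
  finally show ?thesis .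
qed

lemma vnorm_sort_vec: "vnorm n (sort_vec n x) = vnorm n x"
  using sum_sort_map_upt[where g = "\<lambda>y. y\<^sup>2"] by (simp add: vnorm_def sort_vec_def)

lemma rvar_eq:
  assumes "prob_space M" "Y \<in> borel_measurable M" "integrable M (\<lambda>\<omega>. (Y \<omega>)\<^sup>2)"
  shows "rvar M Y = (\<integral>\<omega>. (Y \<omega>)\<^sup>2 \<partial>M) - (\<integral>\<omega>. Y \<omega> \<partial>M)\<^sup>2"
proof -
  interpret prob_space M
    by fact
  have "integrable M Y"
    using square_integrable_imp_integrable[OF assms(2,3)] .
  define c where "c = (\<integral>\<omega>. Y \<omega> \<partial>M)"
  have "rvar M Y = (\<integral>\<omega>. (Y \<omega>)\<^sup>2 - 2 * c * Y \<omega> + c\<^sup>2 \<partial>M)"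
    unfolding rvar_def c_def[symmetric] by (simp add: power2_eq_square algebra_simps)
  also have "\<dots> = (\<integral>\<omega>. (Y \<omega>)\<^sup>2 \<partial>M) - 2 * c * c + c\<^sup>2"
    using \<open>integrable M Y\<close> assms(3) by (simp add: c_def prob_space)
  finally show ?thesis
    by (simp add: c_def power2_eq_square)
qed

lemma integrable_vnorm:
  assumes "\<And>i. i < n \<Longrightarrow> integrable M (\<lambda>\<omega>. V \<omega> i)"
  shows "integrable M (\<lambda>\<omega>. vnorm n (V \<omega>))"
proof (rule Bochner_Integration.integrable_bound)
  show "integrable M (\<lambda>\<omega>. \<Sum>i<n. \<bar>V \<omega> i\<bar>)"
    using assms by auto
  have "(\<lambda>\<omega>. V \<omega> i) \<in> borel_measurable M" if "i < n" for i
    using assms that by auto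
  then show "(\<lambda>\<omega>. vnorm n (V \<omega>)) \<in> borel_measurable M"
    unfolding vnorm_def by measurable
  show "AE \<omega> in M. norm (vnorm n (V \<omega>)) \<le> norm (\<Sum>i<n. \<bar>V \<omega> i\<bar>)"
    by (simp add: vnorm_eq_L2_set L2_set_le_sum_abs)
qed

text \<open>By Cauchy-Schwarz, \<open>\<parallel>m\<parallel>\<^sup>2 = E \<langle>m, V\<rangle> \<le> \<parallel>m\<parallel> E \<parallel>V\<parallel>\<close> for the mean vector \<open>m\<close>.\<close>
lemma vnorm_integral_le:
  assumes "\<And>i. i < n \<Longrightarrow> integrable M (\<lambda>\<omega>. V \<omega> i)"
  shows "vnorm n (\<lambda>i. \<integral>\<omega>. V \<omega> i \<partial>M) \<le> (\<integral>\<omega>. vnorm n (V \<omega>) \<partial>M)"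
proof -
  define m where "m = (\<lambda>i. \<integral>\<omega>. V \<omega> i \<partial>M)"
  define q where "q = vnorm n m"
  have "q\<^sup>2 = (\<Sum>i<n. m i * (\<integral>\<omega>. V \<omega> i \<partial>M))"
    unfolding q_def vnorm_sq by (simp add: m_def power2_eq_square)
  also have "\<dots> = (\<integral>\<omega>. (\<Sum>i<n. m i * V \<omega> i) \<partial>M)"
    using assms by (simp add: Bochner_Integration.integral_sum)
  also have "\<dots> \<le> (\<integral>\<omega>. q * vnorm n (V \<omega>) \<partial>M)"
  proof (rule integral_mono)
    show "integrable M (\<lambda>\<omega>. \<Sum>i<n. m i * V \<omega> i)"
      using assms by auto
    show "integrable M (\<lambda>\<omega>. q * vnorm n (V \<omega>))"
      using integrable_vnorm[OF assms] by simp
    fix \<omega>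
    have "(\<Sum>i<n. m i * V \<omega> i) \<le> (\<Sum>i<n. \<bar>m i\<bar> * \<bar>V \<omega> i\<bar>)"
      by (intro sum_mono) (metis abs_ge_self abs_mult)
    also have "\<dots> \<le> L2_set m {..<n} * L2_set (V \<omega>) {..<n}"
      by (rule L2_set_mult_ineq)
    finally show "(\<Sum>i<n. m i * V \<omega> i) \<le> q * vnorm n (V \<omega>)"
      by (simp add: q_def vnorm_eq_L2_set)
  qed
  also have "\<dots> = q * (\<integral>\<omega>. vnorm n (V \<omega>) \<partial>M)"
    by simp
  finally have "q\<^sup>2 \<le> q * (\<integral>\<omega>. vnorm n (V \<omega>) \<partial>M)" .
  moreover have "q \<ge> 0" "(\<integral>\<omega>. vnorm n (V \<omega>) \<partial>M) \<ge> 0"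
    by (simp_all add: q_def)
  ultimately show ?thesis
    unfolding q_def[symmetric] m_def[symmetric]
    by (cases "q = 0") (auto simp: power2_eq_square)
qed

lemma vvar_eq_sum_rvar:
  assumes "prob_space M"
    and "\<And>i. i < n \<Longrightarrow> (\<lambda>\<omega>. V \<omega> i) \<in> borel_measurable M"
    and "\<And>i. i < n \<Longrightarrow> integrable M (\<lambda>\<omega>. (V \<omega> i)\<^sup>2)"
  shows "vvar M n V = (\<Sum>i<n. rvar M (\<lambda>\<omega>. V \<omega> i))"
proof -
  interpret prob_space M
    by fact
  have "integrable M (\<lambda>\<omega>. (V \<omega> i - c)\<^sup>2)" if "i < n" for i c
  proof -
    have "integrable M (\<lambda>\<omega>. V \<omega> i)"
      using square_integrable_imp_integrable[OF assms(2,3)[OF that]] .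
    then show ?thesis
      using assms(3)[OF that] by (simp add: power2_diff)
  qed
  then show ?thesis
    unfolding vvar_def rvar_def vnorm_sq by (simp add: Bochner_Integration.integral_sum)
qed

theorem rvar_vnorm_le_vvar:
  assumes "prob_space M"
    and "\<And>i. i < n \<Longrightarrow> (\<lambda>\<omega>. V \<omega> i) \<in> borel_measurable M"
    and "\<And>i. i < n \<Longrightarrow> integrable M (\<lambda>\<omega>. (V \<omega> i)\<^sup>2)"
  shows "rvar M (\<lambda>\<omega>. vnorm n (V \<omega>)) \<le> vvar M n V"
proof -
  interpret prob_space M
    by fact
  have V_int: "integrable M (\<lambda>\<omega>. V \<omega> i)" if "i < n" for i
    using square_integrable_imp_integrable[OF assms(2,3)[OF that]] .
  define m where "m = (\<lambda>i. \<integral>\<omega>. V \<omega> i \<partial>M)"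
  have "rvar M (\<lambda>\<omega>. vnorm n (V \<omega>))
      = (\<integral>\<omega>. (vnorm n (V \<omega>))\<^sup>2 \<partial>M) - (\<integral>\<omega>. vnorm n (V \<omega>) \<partial>M)\<^sup>2"
  proof (rule rvar_eq)
    show "(\<lambda>\<omega>. vnorm n (V \<omega>)) \<in> borel_measurable M"
      using assms(2) unfolding vnorm_def by measurable
    show "integrable M (\<lambda>\<omega>. (vnorm n (V \<omega>))\<^sup>2)"
      unfolding vnorm_sq by (intro Bochner_Integration.integrable_sum) (use assms(3) in auto)
  qed fact
  also have "\<dots> \<le> (\<integral>\<omega>. (vnorm n (V \<omega>))\<^sup>2 \<partial>M) - (vnorm n m)\<^sup>2"
    using vnorm_integral_le[OF V_int] by (simp add: m_def power_mono)
  also have "\<dots> = (\<Sum>i<n. (\<integral>\<omega>. (V \<omega> i)\<^sup>2 \<partial>M) - (m i)\<^sup>2)"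
    using assms(3) by (simp add: vnorm_sq Bochner_Integration.integral_sum sum_subtractf)
  also have "\<dots> = (\<Sum>i<n. rvar M (\<lambda>\<omega>. V \<omega> i))"
    unfolding m_def using assms by (intro sum.cong refl rvar_eq[symmetric]) auto
  also have "\<dots> = vvar M n V"
    using assms by (rule vvar_eq_sum_rvar[symmetric])
  finally show ?thesis .
qed

corollary rvar_vnorm_le_vvar_sort_vec:
  assumes "prob_space M"
    and "\<And>i. i < n \<Longrightarrow> (\<lambda>\<omega>. X \<omega> i) \<in> borel_measurable M"
    and "\<And>i. i < n \<Longrightarrow> integrable M (\<lambda>\<omega>. (X \<omega> i)\<^sup>2)"
  shows "rvar M (\<lambda>\<omega>. vnorm n (X \<omega>)) \<le> vvar M n (\<lambda>\<omega>. sort_vec n (X \<omega>))"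
proof -
  have measurable: "(\<lambda>\<omega>. sort_vec n (X \<omega>) i) \<in> borel_measurable M" for i
    using assms(2) by (rule borel_measurable_sort_vec)
  have square_integrable: "integrable M (\<lambda>\<omega>. (sort_vec n (X \<omega>) i)\<^sup>2)" if "i < n" for i
  proof (rule Bochner_Integration.integrable_bound)
    show "integrable M (\<lambda>\<omega>. (vnorm n (X \<omega>))\<^sup>2)"
      unfolding vnorm_sq by (intro Bochner_Integration.integrable_sum) (use assms(3) in auto)
    show "AE \<omega> in M. norm ((sort_vec n (X \<omega>) i)\<^sup>2) \<le> norm ((vnorm n (X \<omega>))\<^sup>2)"
      using component_sq_le_vnorm_sq[OF that, of "sort_vec n _"] by (simp add: vnorm_sort_vec)
  qed (use measurable in measurable)
  have "rvar M (\<lambda>\<omega>. vnorm n (sort_vec n (X \<omega>))) \<le> vvar M n (\<lambda>\<omega>. sort_vec n (X \<omega>))"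
    using assms(1) measurable square_integrable by (rule rvar_vnorm_le_vvar)
  then show ?thesis
    by (simp add: vnorm_sort_vec)
qed

section \<open>Ratios of Gamma values\<close>

text \<open>Iterating the recurrence backwards from \<open>n + 2 m\<close> gives \<open>f n \<ge> - B n / (n + 2 m)\<close>.\<close>
lemma nonneg_if_recurrence_bounded_below:
  fixes f :: "nat \<Rightarrow> real"
  assumes rec: "\<And>n. n \<ge> 1 \<Longrightarrow> f (n + 2) \<le> ((real n + 1) / real n)\<^sup>2 * f n"
    and bounded: "\<And>n. n \<ge> 1 \<Longrightarrow> f n \<ge> - B"
    and "B \<ge> 0" "n \<ge> 1"
  shows "f n \<ge> 0"
proof -
  have iterated: "f n \<ge> - B * real n / (real n + 2 * real m)" if "n \<ge> 1" for n m
    using that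
  proof (induction m arbitrary: n)
    case 0
    then show ?case
      using bounded by simp
  next
    case (Suc m)
    define a where "a = ((real n + 1) / real n)\<^sup>2"
    have a: "a > 0"
      using Suc.prems by (simp add: a_def)
    have "- B * real (n + 2) / (real (n + 2) + 2 * real m) \<le> f (n + 2)"
      using Suc.IH[of "n + 2"] by simp
    also have "\<dots> \<le> a * f n"
      using rec Suc.prems by (simp add: a_def)
    finally have "- B * real (n + 2) / (real (n + 2) + 2 * real m) / a \<le> f n"
      by (simp only: pos_divide_le_eq[OF a] mult.commute)
    moreover have "real (n + 2) / a \<le> real n"
    proof -
      have "(real n + 2) * (real n)\<^sup>2 \<le> real n * (real n + 1)\<^sup>2"
        by (simp add: power2_eq_square algebra_simps)
      then have "(real n + 2) * (real n)\<^sup>2 / (real n + 1)\<^sup>2 \<le> real n"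
        by (simp add: pos_divide_le_eq mult.commute)
      moreover have "real (n + 2) / a = (real n + 2) * (real n)\<^sup>2 / (real n + 1)\<^sup>2"
        using Suc.prems by (simp add: a_def field_simps)
      ultimately show ?thesis
        by simp
    qed
    then have "B * (real (n + 2) / a) / (real n + 2 * real (Suc m))
        \<le> B * real n / (real n + 2 * real (Suc m))"
      using \<open>B \<ge> 0\<close> by (intro divide_right_mono mult_left_mono) auto
    moreover have "- B * real (n + 2) / (real (n + 2) + 2 * real m) / a
        = - (B * (real (n + 2) / a) / (real n + 2 * real (Suc m)))"
      using a by (simp add: divide_simps)
    ultimately show ?case
      by linarith
  qed
  have "(\<lambda>m. - B * real n / (real n + 2 * real m)) \<longlonglongrightarrow> 0"
    by (intro tendsto_divide_0[OF tendsto_const] filterlim_at_top_imp_at_infinity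
        filterlim_tendsto_add_at_top[OF tendsto_const] filterlim_tendsto_pos_mult_at_top[OF tendsto_const])
      (auto simp: filterlim_real_sequentially)
  then show ?thesis
    by (rule LIMSEQ_le_const2) (use iterated[OF \<open>n \<ge> 1\<close>] in auto)
qed

lemma Gamma_plus_half_sq_le:
  fixes x :: real
  assumes "x > 0"
  shows "(Gamma (x + 1/2))\<^sup>2 \<le> x * (Gamma x)\<^sup>2"
proof -
  have pos: "Gamma x > 0" "Gamma (x + 1/2) > 0" "Gamma (x + 1) > 0"
    using assms by (auto intro!: Gamma_real_pos)
  have "ln (Gamma ((1/2) *\<^sub>R x + (1 - 1/2) *\<^sub>R (x + 1)))
      \<le> (1/2) * ln (Gamma x) + (1 - 1/2) * ln (Gamma (x + 1))"
    using convex_onD[OF log_convex_Gamma_real, of "1/2" x "x + 1"] assms by simp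
  moreover have "(1/2) *\<^sub>R x + (1 - 1/2) *\<^sub>R (x + 1) = x + 1/2"
    by (simp add: field_simps)
  ultimately have "ln ((Gamma (x + 1/2))\<^sup>2) \<le> ln (Gamma x * Gamma (x + 1))"
    using pos by (simp add: ln_mult ln_realpow)
  then have "(Gamma (x + 1/2))\<^sup>2 \<le> Gamma x * Gamma (x + 1)"
    using pos by simp
  also have "Gamma (x + 1) = x * Gamma x"
    using assms by (simp add: Gamma_plus1 nonpos_Ints_def)
  finally show ?thesis
    by (simp add: power2_eq_square mult_ac)
qed

definition gamma_ratio_sq :: "nat \<Rightarrow> real" where
  "gamma_ratio_sq n = (Gamma ((real n + 1) / 2) / Gamma (real n / 2))\<^sup>2"

lemma Gamma_half_nonzero:
  assumes "n \<ge> 1"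
  shows "Gamma ((real n + 1) / 2) \<noteq> 0" "Gamma (real n / 2) \<noteq> 0"
  using assms by (intro dual_order.strict_implies_not_eq Gamma_real_pos; simp)+

lemma gamma_ratio_sq_pos: "n \<ge> 1 \<Longrightarrow> gamma_ratio_sq n > 0"
  using Gamma_half_nonzero unfolding gamma_ratio_sq_def by simp

lemma gamma_ratio_sq_mult_Suc:
  assumes "n \<ge> 1"
  shows "gamma_ratio_sq n * gamma_ratio_sq (Suc n) = (real n)\<^sup>2 / 4"
proof -
  have Gamma_Suc: "Gamma ((real (Suc n) + 1) / 2) = real n / 2 * Gamma (real n / 2)"
    using Gamma_plus1[of "real n / 2"] assms by (simp add: nonpos_Ints_def field_simps)
  have "real (Suc n) / 2 = (real n + 1) / 2"
    by simp
  then show ?thesis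
    using Gamma_half_nonzero[OF assms] unfolding gamma_ratio_sq_def Gamma_Suc
    by (simp add: field_simps power2_eq_square)
qed

lemma gamma_ratio_sq_le:
  assumes "n \<ge> 1"
  shows "gamma_ratio_sq n \<le> real n / 2"
proof -
  have "(Gamma (real n / 2))\<^sup>2 > 0"
    using Gamma_half_nonzero[OF assms] by simp
  moreover have "(real n + 1) / 2 = real n / 2 + 1/2"
    by simp
  ultimately show ?thesis
    using Gamma_plus_half_sq_le[of "real n / 2"] assms
    unfolding gamma_ratio_sq_def by (simp only: power_divide pos_divide_le_eq)
qed

lemma gamma_ratio_sq_ge:
  assumes "n \<ge> 1"
  shows "real n / 2 - 1/2 \<le> gamma_ratio_sq n"
proof -
  let ?g = gamma_ratio_sq
  have "(real n)\<^sup>2 / 4 = ?g n * ?g (Suc n)"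
    using gamma_ratio_sq_mult_Suc[OF assms] by simp
  also have "\<dots> \<le> ?g n * ((real n + 1) / 2)"
    using gamma_ratio_sq_le[of "Suc n"] gamma_ratio_sq_pos[OF assms] by (intro mult_left_mono) auto
  finally have "(real n - 1) * (real n + 1) \<le> 2 * ?g n * (real n + 1)"
    by (simp add: algebra_simps power2_eq_square)
  then have "real n - 1 \<le> 2 * ?g n"
    by (rule mult_right_le_imp_le) simp
  then show ?thesis
    by simp
qed

lemma gamma_ratio_sq_Suc_Suc:
  assumes "n \<ge> 1"
  shows "gamma_ratio_sq (n + 2) = ((real n + 1) / real n)\<^sup>2 * gamma_ratio_sq n"
proof -
  let ?g = gamma_ratio_sq
  have "(real n)\<^sup>2 * ?g (n + 2) = 4 * (?g n * ?g (Suc n)) * ?g (n + 2)"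
    by (simp add: gamma_ratio_sq_mult_Suc[OF assms])
  also have "\<dots> = 4 * ?g n * (?g (Suc n) * ?g (Suc (Suc n)))"
    by (simp add: mult_ac)
  also have "\<dots> = (real n + 1)\<^sup>2 * ?g n"
    using gamma_ratio_sq_mult_Suc[of "Suc n"] by (simp add: add.commute)
  finally show ?thesis
    using assms by (simp add: field_simps)
qed

definition gamma_ratio_defect :: "nat \<Rightarrow> real" where
  "gamma_ratio_defect n = gamma_ratio_sq n - real n / 2 + 1/4"

lemma gamma_ratio_defect_Suc_Suc:
  assumes "n \<ge> 1"
  shows "gamma_ratio_defect (n + 2)
    = ((real n + 1) / real n)\<^sup>2 * gamma_ratio_defect n - 1 / (4 * (real n)\<^sup>2)"
  using assms unfolding gamma_ratio_defect_def gamma_ratio_sq_Suc_Suc[OF assms]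
  by (simp add: field_simps power2_eq_square)

lemma abs_gamma_ratio_defect_le:
  assumes "n \<ge> 1"
  shows "\<bar>gamma_ratio_defect n\<bar> \<le> 1/4"
  using gamma_ratio_sq_le[OF assms] gamma_ratio_sq_ge[OF assms]
  unfolding gamma_ratio_defect_def abs_le_iff by (intro conjI) linarith+

lemma gamma_ratio_defect_nonneg: "n \<ge> 1 \<Longrightarrow> gamma_ratio_defect n \<ge> 0"
  by (rule nonneg_if_recurrence_bounded_below[of _ "1/4"])
    (use gamma_ratio_defect_Suc_Suc abs_gamma_ratio_defect_le in \<open>force+\<close>)

lemma gamma_ratio_defect_le:
  assumes "n \<ge> 1"
  shows "gamma_ratio_defect n \<le> 1 / (8 * real n)"
proof -
  have "1 / (8 * real m) - gamma_ratio_defect m \<ge> - (1/4)" if "m \<ge> 1" for m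
  proof -
    have "0 < 1 / (8 * real m)"
      using that by simp
    then show ?thesis
      using abs_le_D1[OF abs_gamma_ratio_defect_le[OF that]] by linarith
  qed
  moreover have "1 / (8 * real (m + 2)) - gamma_ratio_defect (m + 2)
      \<le> ((real m + 1) / real m)\<^sup>2 * (1 / (8 * real m) - gamma_ratio_defect m)" if "m \<ge> 1" for m
  proof -
    have "(real m)^3 + 2 * real m * (real m + 2) \<le> (real m + 1)\<^sup>2 * (real m + 2)"
      by (simp add: power2_eq_square power3_eq_cube algebra_simps)
    then have "1 / (8 * (real m + 2)) + 1 / (4 * (real m)\<^sup>2) \<le> ((real m + 1) / real m)\<^sup>2 / (8 * real m)"
      using that by (simp add: divide_simps power2_eq_square power3_eq_cube) (simp add: algebra_simps)
    then show ?thesis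
      unfolding gamma_ratio_defect_Suc_Suc[OF that] by (simp add: algebra_simps)
  qed
  ultimately have "1 / (8 * real n) - gamma_ratio_defect n \<ge> 0"
    by (intro nonneg_if_recurrence_bounded_below[of "\<lambda>n. 1 / (8 * real n) - gamma_ratio_defect n" "1/4"])
      (use assms in auto)
  then show ?thesis
    by simp
qed

lemma gamma_ratio_defect_diff_Suc_Suc_le:
  assumes m: "m \<ge> 1"
  shows "gamma_ratio_defect (m + 2) - gamma_ratio_defect (m + 2 + 1)
    \<le> ((real m + 1) / real m)\<^sup>2 * (gamma_ratio_defect m - gamma_ratio_defect (m + 1))"
proof -
  let ?d = gamma_ratio_defect
  define a0 where "a0 = ((real m + 1) / real m)\<^sup>2"
  define a1 where "a1 = ((real m + 2) / (real m + 1))\<^sup>2"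
  have a0_a1: "a0 - a1 = (2 * (real m)\<^sup>2 + 4 * real m + 1) / ((real m)\<^sup>2 * (real m + 1)\<^sup>2)"
    using m unfolding a0_def a1_def
    by (simp add: divide_simps) (simp add: power2_eq_square power4_eq_xxxx algebra_simps)
  have errors: "1 / (4 * (real m)\<^sup>2) - 1 / (4 * (real m + 1)\<^sup>2)
      = (2 * real m + 1) / (4 * (real m)\<^sup>2 * (real m + 1)\<^sup>2)"
    using m by (simp add: divide_simps) (simp add: power2_eq_square algebra_simps)
  have "(a0 - a1) * ?d (m + 1) \<le> (a0 - a1) * (1 / (8 * (real m + 1)))"
    using gamma_ratio_defect_le[of "m + 1"] unfolding a0_a1
    by (intro mult_left_mono) (simp_all add: add.commute)
  also have "\<dots> \<le> 1 / (4 * (real m)\<^sup>2) - 1 / (4 * (real m + 1)\<^sup>2)"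
  proof -
    have "2 * (real m)\<^sup>2 + 4 * real m + 1 \<le> 2 * (real m + 1) * (2 * real m + 1)"
      by (simp add: power2_eq_square algebra_simps)
    then show ?thesis
      unfolding a0_a1 errors using m
      by (simp add: divide_simps) (simp add: power2_eq_square algebra_simps)
  qed
  finally have "(a0 - a1) * ?d (m + 1) \<le> 1 / (4 * (real m)\<^sup>2) - 1 / (4 * (real m + 1)\<^sup>2)" .
  moreover have "?d (m + 2) = a0 * ?d m - 1 / (4 * (real m)\<^sup>2)"
    using gamma_ratio_defect_Suc_Suc[OF m] by (simp add: a0_def)
  moreover have "?d (m + 2 + 1) = a1 * ?d (m + 1) - 1 / (4 * (real m + 1)\<^sup>2)"
    using gamma_ratio_defect_Suc_Suc[of "m + 1"] by (simp add: a1_def add_ac)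
  ultimately show ?thesis
    unfolding a0_def[symmetric] by (simp add: algebra_simps)
qed

lemma gamma_ratio_defect_Suc_le:
  assumes "n \<ge> 1"
  shows "gamma_ratio_defect (Suc n) \<le> gamma_ratio_defect n"
proof -
  let ?d = gamma_ratio_defect
  have "?d m - ?d (m + 1) \<ge> - (1/2)" if "m \<ge> 1" for m
    using abs_gamma_ratio_defect_le[of m] abs_gamma_ratio_defect_le[of "m + 1"] that by auto
  then have "?d n - ?d (n + 1) \<ge> 0"
    using gamma_ratio_defect_diff_Suc_Suc_le assms
    by (intro nonneg_if_recurrence_bounded_below[of "\<lambda>n. ?d n - ?d (n + 1)" "1/2"]) auto
  then show ?thesis
    by simp
qed

lemma gamma_ratio_defect_tendsto_0: "gamma_ratio_defect \<longlonglongrightarrow> 0"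
proof (rule tendsto_sandwich[of "\<lambda>_. 0" _ _ "\<lambda>n. 1 / (8 * real n)"])
  show "\<forall>\<^sub>F n in sequentially. 0 \<le> gamma_ratio_defect n"
    using eventually_ge_at_top[of "1::nat"] by eventually_elim (rule gamma_ratio_defect_nonneg)
  show "\<forall>\<^sub>F n in sequentially. gamma_ratio_defect n \<le> 1 / (8 * real n)"
    using eventually_ge_at_top[of "1::nat"] by eventually_elim (rule gamma_ratio_defect_le)
  show "(\<lambda>n. 1 / (8 * real n)) \<longlonglongrightarrow> 0"
    by (intro tendsto_divide_0[OF tendsto_const] filterlim_at_top_imp_at_infinity
        filterlim_tendsto_pos_mult_at_top[OF tendsto_const]) (auto simp: filterlim_real_sequentially)
qed simp

section \<open>Gaussian integrals\<close>

lemma nn_integral_ennreal_cmult: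
  assumes "c \<ge> 0" "f \<in> borel_measurable M"
  shows "(\<integral>\<^sup>+x. ennreal (c * f x) \<partial>M) = ennreal c * (\<integral>\<^sup>+x. ennreal (f x) \<partial>M)"
  using assms by (simp add: ennreal_mult' nn_integral_cmult)

lemma nn_integral_powr_exp:
  fixes a l :: real
  assumes "a > 0" "l > 0"
  shows "(\<integral>\<^sup>+t. ennreal (indicator {0<..} t * t powr (a - 1) * exp (- (l * t))) \<partial>lborel)
    = ennreal (Gamma a / l powr a)"
proof -
  have "(\<integral>\<^sup>+t. ennreal (indicator {0<..} t * t powr (a - 1) * exp (- (l * t))) \<partial>lborel)
      = ennreal \<bar>1 / l\<bar> * (\<integral>\<^sup>+x. ennreal (indicator {0<..} (0 + (1 / l) * x)
          * (0 + (1 / l) * x) powr (a - 1) * exp (- (l * (0 + (1 / l) * x)))) \<partial>lborel)"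
    using assms by (intro nn_integral_real_affine) auto
  also have "\<dots> = ennreal (1 / l) * (\<integral>\<^sup>+x. ennreal (l powr (1 - a)
      * (indicator {0..} x * x powr (a - 1) / exp x)) \<partial>lborel)"
  proof -
    have "indicator {0<..} (x / l) * (x / l) powr (a - 1) * exp (- x)
        = l powr (1 - a) * (indicator {0..} x * x powr (a - 1) / exp x)" for x
    proof (cases "x > 0")
      case True
      then have "(x / l) powr (a - 1) = l powr (1 - a) * x powr (a - 1)"
        using assms by (simp add: powr_divide powr_diff powr_minus divide_simps)
      then show ?thesis
        using True assms by (simp add: exp_minus field_simps)
    next
      case False
      then show ?thesis
        using assms by (auto simp: indicator_def zero_less_divide_iff)
    qed
    then show ?thesis
      using assms by simp
  qed
  also have "\<dots> = ennreal (1 / l * (l powr (1 - a) * Gamma a))"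
    using assms
    by (subst nn_integral_ennreal_cmult)
      (auto simp: Gamma_conv_nn_integral_real[symmetric] ennreal_mult'[symmetric])
  also have "1 / l * (l powr (1 - a) * Gamma a) = Gamma a / l powr a"
    using assms by (simp add: powr_diff field_simps)
  finally show ?thesis .
qed

text \<open>\<open>sqrt s = s \<cdot> s powr (-1/2)\<close>, and \<open>s powr (-1/2)\<close> is a Gamma integral since \<open>Gamma (1/2) = sqrt pi\<close>.\<close>
lemma sqrt_eq_nn_integral:
  fixes s :: real
  assumes "s \<ge> 0"
  shows "ennreal (sqrt s) = (\<integral>\<^sup>+t. ennreal (s / sqrt pi
    * (indicator {0<..} t * t powr (1/2 - 1) * exp (- (s * t)))) \<partial>lborel)"
proof (cases "s = 0")
  case False
  then have "s > 0"
    using assms by simp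
  then have "(\<integral>\<^sup>+t. ennreal (s / sqrt pi
      * (indicator {0<..} t * t powr (1/2 - 1) * exp (- (s * t)))) \<partial>lborel)
      = ennreal (s / sqrt pi * (Gamma (1/2) / s powr (1/2)))"
    using nn_integral_powr_exp[of "1/2" s]
    by (subst nn_integral_ennreal_cmult) (auto simp: ennreal_mult'[symmetric])
  also have "s / sqrt pi * (Gamma (1/2) / s powr (1/2)) = sqrt s"
    using \<open>s > 0\<close> by (simp add: Gamma_one_half_real powr_half_sqrt real_div_sqrt)
  finally show ?thesis ..
qed simp

text \<open>Write \<open>(1 + b t) powr (-c)\<close> as a Gamma integral and integrate in \<open>t\<close> first.\<close>
lemma nn_integral_powr_div_powr:
  fixes a b c :: real
  assumes "0 < a" "a < c" "b > 0"
  shows "(\<integral>\<^sup>+t. ennreal (indicator {0<..} t * t powr (a - 1) / (1 + b * t) powr c) \<partial>lborel)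
    = ennreal (Gamma a * Gamma (c - a) / (b powr a * Gamma c))"
proof -
  have "c > 0"
    using assms by simp
  then have "Gamma c \<noteq> 0"
    by (intro dual_order.strict_implies_not_eq Gamma_real_pos)
  define h where "h t u = indicator {0<..} t * t powr (a - 1) / Gamma c
    * (indicator {0<..} u * u powr (c - 1) * exp (- ((1 + b * t) * u)))" for t u :: real
  have integral_u: "ennreal (indicator {0<..} t * t powr (a - 1) / (1 + b * t) powr c)
      = (\<integral>\<^sup>+u. ennreal (h t u) \<partial>lborel)" for t
  proof (cases "t > 0")
    case True
    have "1 + b * t > 0"
      using True assms by (simp add: add_pos_pos)
    then show ?thesis
      using True \<open>c > 0\<close> \<open>Gamma c \<noteq> 0\<close> nn_integral_powr_exp[of c "1 + b * t"] unfolding h_def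
      by (subst nn_integral_ennreal_cmult) (auto simp: ennreal_mult'[symmetric])
  qed (simp add: h_def)
  have integral_t: "(\<integral>\<^sup>+t. ennreal (h t u) \<partial>lborel) = ennreal (Gamma a / (b powr a * Gamma c)
      * (indicator {0<..} u * u powr ((c - a) - 1) * exp (- (1 * u))))" for u
  proof (cases "u > 0")
    case True
    have h_eq: "h t u = u powr (c - 1) * exp (- u) / Gamma c
        * (indicator {0<..} t * t powr (a - 1) * exp (- ((b * u) * t)))" for t
      using True by (simp add: h_def exp_add[symmetric] algebra_simps)
    have "(\<integral>\<^sup>+t. ennreal (h t u) \<partial>lborel)
        = ennreal (u powr (c - 1) * exp (- u) / Gamma c * (Gamma a / (b * u) powr a))"
      unfolding h_eq using True assms \<open>c > 0\<close> \<open>Gamma c \<noteq> 0\<close> nn_integral_powr_exp[of a "b * u"]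
      by (subst nn_integral_ennreal_cmult) (auto simp: ennreal_mult'[symmetric])
    also have "u powr (c - 1) * exp (- u) / Gamma c * (Gamma a / (b * u) powr a)
        = Gamma a / (b powr a * Gamma c) * (indicator {0<..} u * u powr ((c - a) - 1) * exp (- (1 * u)))"
      using True assms by (simp add: powr_mult powr_diff powr_add field_simps)
    finally show ?thesis .
  qed (simp add: h_def)
  have "(\<integral>\<^sup>+t. ennreal (indicator {0<..} t * t powr (a - 1) / (1 + b * t) powr c) \<partial>lborel)
      = (\<integral>\<^sup>+t. \<integral>\<^sup>+u. ennreal (h t u) \<partial>lborel \<partial>lborel)"
    by (simp only: integral_u)
  also have "\<dots> = (\<integral>\<^sup>+u. \<integral>\<^sup>+t. ennreal (h t u) \<partial>lborel \<partial>lborel)"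
    by (rule lborel_pair.Fubini'[symmetric]) (unfold h_def, measurable)
  also have "\<dots> = ennreal (Gamma a / (b powr a * Gamma c) * (Gamma (c - a) / 1 powr (c - a)))"
    unfolding integral_t using assms \<open>c > 0\<close> \<open>Gamma c \<noteq> 0\<close> nn_integral_powr_exp[of "c - a" 1]
    by (subst nn_integral_ennreal_cmult) (auto simp: ennreal_mult'[symmetric])
  finally show ?thesis
    by simp
qed

abbreviation std_normal_measure :: "real measure" where
  "std_normal_measure \<equiv> density lborel std_normal_density"

lemma prob_space_std_gauss: "prob_space (std_gauss n)"
  unfolding std_gauss_def by (intro prob_space_PiM prob_space_normal_density) simp

lemma std_normal_density_mult_exp:
  fixes t y :: real
  assumes "t \<ge> 0"
  shows "std_normal_density y * exp (- (t * y\<^sup>2))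
    = 1 / sqrt (1 + 2 * t) * normal_density 0 (1 / sqrt (1 + 2 * t)) y"
proof -
  define r where "r = 1 + 2 * t"
  have r: "r > 0"
    using assms by (simp add: r_def)
  have "normal_density 0 (1 / sqrt r) y = sqrt r / sqrt (2 * pi) * exp (- (r * y\<^sup>2) / 2)"
    using r by (simp add: normal_density_def power_divide real_sqrt_divide field_simps)
  moreover have "std_normal_density y * exp (- (t * y\<^sup>2)) = 1 / sqrt (2 * pi) * exp (- (r * y\<^sup>2) / 2)"
    unfolding std_normal_density_def r_def by (simp add: mult.assoc exp_add[symmetric] field_simps)
  ultimately show ?thesis
    using r by (simp flip: r_def)
qed

lemma nn_integral_std_normal_even_moment_exp:
  fixes t :: real
  assumes "t \<ge> 0"
  defines "\<sigma> \<equiv> 1 / sqrt (1 + 2 * t)"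
  shows "(\<integral>\<^sup>+y. ennreal (y ^ (2 * k) * exp (- (t * y\<^sup>2))) \<partial>std_normal_measure)
    = ennreal (\<sigma> * (fact (2 * k) / ((2 / \<sigma>\<^sup>2) ^ k * fact k)))"
proof -
  have \<sigma>: "\<sigma> > 0"
    using assms by simp
  have moment: "has_bochner_integral lborel (\<lambda>y. normal_density 0 \<sigma> y * y ^ (2 * k))
      (fact (2 * k) / ((2 / \<sigma>\<^sup>2) ^ k * fact k))"
    using normal_moment_even[where \<sigma> = \<sigma> and \<mu> = 0 and k = k] \<sigma> by simp
  have "(\<integral>\<^sup>+y. ennreal (y ^ (2 * k) * exp (- (t * y\<^sup>2))) \<partial>std_normal_measure)
      = (\<integral>\<^sup>+y. ennreal (std_normal_density y) * ennreal (y ^ (2 * k) * exp (- (t * y\<^sup>2))) \<partial>lborel)"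
    by (subst nn_integral_density) auto
  also have "\<dots> = (\<integral>\<^sup>+y. ennreal (\<sigma> * (normal_density 0 \<sigma> y * y ^ (2 * k))) \<partial>lborel)"
  proof (intro nn_integral_cong)
    fix y :: real
    have "std_normal_density y * (y ^ (2 * k) * exp (- (t * y\<^sup>2)))
        = y ^ (2 * k) * (std_normal_density y * exp (- (t * y\<^sup>2)))"
      by (simp only: mult_ac)
    also have "\<dots> = \<sigma> * (normal_density 0 \<sigma> y * y ^ (2 * k))"
      unfolding std_normal_density_mult_exp[OF assms(1)] \<sigma>_def by (simp only: mult_ac)
    finally have "std_normal_density y * (y ^ (2 * k) * exp (- (t * y\<^sup>2)))
        = \<sigma> * (normal_density 0 \<sigma> y * y ^ (2 * k))" .
    then show "ennreal (std_normal_density y) * ennreal (y ^ (2 * k) * exp (- (t * y\<^sup>2)))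
        = ennreal (\<sigma> * (normal_density 0 \<sigma> y * y ^ (2 * k)))"
      by (simp only: ennreal_mult'[symmetric, OF normal_density_nonneg])
  qed
  also have "\<dots> = ennreal \<sigma> * ennreal (fact (2 * k) / ((2 / \<sigma>\<^sup>2) ^ k * fact k))"
    using \<sigma> moment
    by (subst nn_integral_ennreal_cmult, simp, measurable, subst nn_integral_eq_integral)
      (auto simp: has_bochner_integral_iff normal_density_nonneg)
  also have "\<dots> = ennreal (\<sigma> * (fact (2 * k) / ((2 / \<sigma>\<^sup>2) ^ k * fact k)))"
    by (rule ennreal_mult'[symmetric]) (use \<sigma> in simp)
  finally show ?thesis .
qed

lemma nn_integral_std_gauss_sum_sq_exp:
  fixes t :: real
  assumes "t \<ge> 0"
  shows "(\<integral>\<^sup>+x. ennreal ((\<Sum>j<n. (x j)\<^sup>2) * exp (- (t * (\<Sum>j<n. (x j)\<^sup>2)))) \<partial>std_gauss n)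
    = ennreal (real n * (1 / sqrt (1 + 2 * t)) ^ (n + 2))"
proof -
  interpret product_sigma_finite "\<lambda>_::nat. std_normal_measure"
    by (simp add: product_sigma_finite_def prob_space_imp_sigma_finite prob_space_normal_density)
  define \<sigma> where "\<sigma> = 1 / sqrt (1 + 2 * t)"
  have \<sigma>: "\<sigma> > 0"
    using assms by (simp add: \<sigma>_def)
  define g where "g i j y = (if j = i then y\<^sup>2 else 1) * exp (- (t * y\<^sup>2))" for i j :: nat and y :: real
  have integral_g: "(\<integral>\<^sup>+y. ennreal (g i j y) \<partial>std_normal_measure) = ennreal ((if j = i then \<sigma>\<^sup>2 else 1) * \<sigma>)"
    for i j
    using nn_integral_std_normal_even_moment_exp[OF assms, of 0]
      nn_integral_std_normal_even_moment_exp[OF assms, of 1] \<sigma>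
    by (simp add: g_def \<sigma>_def power2_eq_square field_simps)
  have expand: "(\<Sum>j<n. (x j)\<^sup>2) * exp (- (t * (\<Sum>j<n. (x j)\<^sup>2))) = (\<Sum>i<n. \<Prod>j<n. g i j (x j))"
    for x :: "nat \<Rightarrow> real"
  proof -
    have "(\<Prod>j<n. g i j (x j)) = (x i)\<^sup>2 * (\<Prod>j<n. exp (- (t * (x j)\<^sup>2)))" if "i < n" for i
      using that by (simp add: g_def prod.distrib prod.delta)
    then show ?thesis
      by (simp add: sum_distrib_left sum_distrib_right sum_negf[symmetric] exp_sum)
  qed
  have "(\<integral>\<^sup>+x. ennreal ((\<Sum>j<n. (x j)\<^sup>2) * exp (- (t * (\<Sum>j<n. (x j)\<^sup>2)))) \<partial>std_gauss n)
      = (\<integral>\<^sup>+x. (\<Sum>i<n. \<Prod>j<n. ennreal (g i j (x j))) \<partial>std_gauss n)"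
    unfolding expand by (simp add: g_def prod_ennreal prod_nonneg sum_nonneg)
  also have "\<dots> = (\<Sum>i<n. \<Prod>j<n. \<integral>\<^sup>+y. ennreal (g i j y) \<partial>std_normal_measure)"
    unfolding std_gauss_def
    by (subst nn_integral_sum) (auto simp: g_def intro!: sum.cong product_nn_integral_prod)
  also have "\<dots> = (\<Sum>i<n. ennreal (\<sigma> ^ (n + 2)))"
  proof (intro sum.cong refl)
    fix i assume "i \<in> {..<n}"
    then have "(\<Prod>j<n. (if j = i then \<sigma>\<^sup>2 else 1) * \<sigma>) = \<sigma> ^ (n + 2)"
      by (simp add: prod.distrib prod.delta power_add power2_eq_square mult.commute)
    then show "(\<Prod>j<n. \<integral>\<^sup>+y. ennreal (g i j y) \<partial>std_normal_measure) = ennreal (\<sigma> ^ (n + 2))"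
      using \<sigma> by (simp add: integral_g prod_ennreal)
  qed
  also have "\<dots> = ennreal (real n * \<sigma> ^ (n + 2))"
    using \<sigma> by (simp add: ennreal_mult' ennreal_of_nat_eq_real_of_nat)
  finally show ?thesis
    unfolding \<sigma>_def .
qed

lemma inverse_sqrt_power:
  fixes r :: real
  assumes "r > 0"
  shows "(1 / sqrt r) ^ m = 1 / r powr (real m / 2)"
  using assms by (simp add: powr_half_sqrt[symmetric] powr_realpow[symmetric] powr_powr power_one_over)

lemma nn_integral_std_gauss_sqrt_kernel:
  fixes t :: real
  shows "(\<integral>\<^sup>+x. ennreal ((\<Sum>j<n. (x j)\<^sup>2) / sqrt pi
      * (indicator {0<..} t * t powr (1/2 - 1) * exp (- ((\<Sum>j<n. (x j)\<^sup>2) * t)))) \<partial>std_gauss n)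
    = ennreal (real n / sqrt pi
      * (indicator {0<..} t * t powr (1/2 - 1) / (1 + 2 * t) powr (real n / 2 + 1)))"
proof (cases "t > 0")
  case True
  have integrand: "(\<Sum>j<n. (x j)\<^sup>2) / sqrt pi
      * (indicator {0<..} t * t powr (1/2 - 1) * exp (- ((\<Sum>j<n. (x j)\<^sup>2) * t)))
    = t powr (1/2 - 1) / sqrt pi * ((\<Sum>j<n. (x j)\<^sup>2) * exp (- (t * (\<Sum>j<n. (x j)\<^sup>2))))"
    for x :: "nat \<Rightarrow> real"
    using True by (simp add: mult_ac)
  have "(1 / sqrt (1 + 2 * t)) ^ (n + 2) = 1 / (1 + 2 * t) powr (real n / 2 + 1)"
    using True by (subst inverse_sqrt_power) (simp_all add: add_divide_distrib add.commute)
  then show ?thesis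
    unfolding integrand using True nn_integral_std_gauss_sum_sq_exp[of t n]
    by (subst nn_integral_ennreal_cmult)
      (auto simp: std_gauss_def ennreal_mult'[symmetric] mult_ac)
qed simp

lemma nn_integral_std_gauss_vnorm:
  assumes "n \<ge> 1"
  shows "(\<integral>\<^sup>+x. ennreal (vnorm n x) \<partial>std_gauss n)
    = ennreal (sqrt 2 * Gamma ((real n + 1) / 2) / Gamma (real n / 2))"
proof -
  interpret pair_sigma_finite "std_gauss n" lborel
    using prob_space_std_gauss
    by (simp add: pair_sigma_finite_def prob_space_imp_sigma_finite lborel.sigma_finite_measure_axioms)
  define c where "c = real n / 2 + 1"
  define S where "S x = (\<Sum>j<n. (x j)\<^sup>2)" for x :: "nat \<Rightarrow> real"
  have "(\<integral>\<^sup>+x. ennreal (vnorm n x) \<partial>std_gauss n) = (\<integral>\<^sup>+x. \<integral>\<^sup>+t. ennreal (S x / sqrt pi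
      * (indicator {0<..} t * t powr (1/2 - 1) * exp (- (S x * t)))) \<partial>lborel \<partial>std_gauss n)"
    unfolding vnorm_def S_def by (intro nn_integral_cong sqrt_eq_nn_integral sum_nonneg) simp
  also have "\<dots> = (\<integral>\<^sup>+t. \<integral>\<^sup>+x. ennreal (S x / sqrt pi
      * (indicator {0<..} t * t powr (1/2 - 1) * exp (- (S x * t)))) \<partial>std_gauss n \<partial>lborel)"
    by (rule Fubini'[symmetric]) (unfold S_def std_gauss_def, measurable)
  also have "\<dots> = (\<integral>\<^sup>+t. ennreal (real n / sqrt pi
      * (indicator {0<..} t * t powr (1/2 - 1) / (1 + 2 * t) powr c)) \<partial>lborel)"
    unfolding S_def c_def by (intro nn_integral_cong nn_integral_std_gauss_sqrt_kernel)
  also have "\<dots> = ennreal (real n / sqrt pi * (Gamma (1/2) * Gamma (c - 1/2) / (2 powr (1/2) * Gamma c)))"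
    using nn_integral_powr_div_powr[of "1/2" c 2]
    by (subst nn_integral_ennreal_cmult) (auto simp: c_def ennreal_mult'[symmetric])
  also have "real n / sqrt pi * (Gamma (1/2) * Gamma (c - 1/2) / (2 powr (1/2) * Gamma c))
      = sqrt 2 * Gamma ((real n + 1) / 2) / Gamma (real n / 2)"
  proof -
    have Gamma_c: "Gamma c = real n / 2 * Gamma (real n / 2)"
      unfolding c_def using assms by (subst Gamma_plus1) (auto simp: nonpos_Ints_def)
    have c: "c - 1/2 = (real n + 1) / 2"
      by (simp add: c_def)
    have "2 / sqrt 2 = sqrt (2 :: real)"
      by (simp add: real_div_sqrt)
    then show ?thesis
      unfolding Gamma_c c using assms Gamma_half_nonzero(2)[OF assms]
      by (simp add: Gamma_one_half_real powr_half_sqrt field_simps)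
  qed
  finally show ?thesis .
qed

lemma gauss_norm_var_eq:
  assumes "n \<ge> 1"
  shows "gauss_norm_var n = real n - 2 * (Gamma ((real n + 1) / 2) / Gamma (real n / 2))\<^sup>2"
proof -
  define \<mu> where "\<mu> = sqrt 2 * Gamma ((real n + 1) / 2) / Gamma (real n / 2)"
  have measurable: "vnorm n \<in> borel_measurable (std_gauss n)"
    unfolding vnorm_def[abs_def] std_gauss_def by measurable
  have "(\<integral>\<^sup>+x. ennreal ((vnorm n x)\<^sup>2) \<partial>std_gauss n) = ennreal (real n)"
    using nn_integral_std_gauss_sum_sq_exp[of 0 n] by (simp add: vnorm_sq)
  then have "has_bochner_integral (std_gauss n) (\<lambda>x. (vnorm n x)\<^sup>2) (real n)"
    using measurable by (intro has_bochner_integral_nn_integral) auto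
  moreover have "\<mu> \<ge> 0"
    unfolding \<mu>_def
    by (intro divide_nonneg_pos mult_nonneg_nonneg less_imp_le Gamma_real_pos) (use assms in auto)
  then have "has_bochner_integral (std_gauss n) (vnorm n) \<mu>"
    using measurable nn_integral_std_gauss_vnorm[OF assms]
    by (intro has_bochner_integral_nn_integral) (auto simp: \<mu>_def)
  ultimately have "gauss_norm_var n = real n - \<mu>\<^sup>2"
    unfolding gauss_norm_var_def
    by (subst rvar_eq[OF prob_space_std_gauss measurable]) (auto simp: has_bochner_integral_iff)
  then show ?thesis
    by (simp add: \<mu>_def power_mult_distrib power_divide)
qed

lemma gauss_norm_var_eq_gamma_ratio_defect:
  "n \<ge> 1 \<Longrightarrow> gauss_norm_var n = 1/2 - 2 * gamma_ratio_defect n"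
  by (simp add: gauss_norm_var_eq gamma_ratio_defect_def gamma_ratio_sq_def)

theorem theorem7:
  shows "(\<forall>(M :: 'a measure) (X :: 'a \<Rightarrow> nat \<Rightarrow> real) (n :: nat).
            prob_space M \<and>
            (\<forall>i<n. (\<lambda>\<omega>. X \<omega> i) \<in> borel_measurable M \<and> integrable M (\<lambda>\<omega>. (X \<omega> i)\<^sup>2))
            \<longrightarrow> vvar M n (\<lambda>\<omega>. sort_vec n (X \<omega>)) \<ge> rvar M (\<lambda>\<omega>. vnorm n (X \<omega>)))
       \<and> (\<forall>n\<ge>1. gauss_norm_var n
                 = real n - 2 * (Gamma ((real n + 1) / 2) / Gamma (real n / 2))\<^sup>2)
       \<and> (\<forall>n\<ge>1. gauss_norm_var n \<le> gauss_norm_var (Suc n))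
       \<and> gauss_norm_var \<longlonglongrightarrow> 1 / 2"
proof (intro conjI allI impI)
  fix M :: "'a measure" and X :: "'a \<Rightarrow> nat \<Rightarrow> real" and n :: nat
  assume "prob_space M \<and>
    (\<forall>i<n. (\<lambda>\<omega>. X \<omega> i) \<in> borel_measurable M \<and> integrable M (\<lambda>\<omega>. (X \<omega> i)\<^sup>2))"
  then show "vvar M n (\<lambda>\<omega>. sort_vec n (X \<omega>)) \<ge> rvar M (\<lambda>\<omega>. vnorm n (X \<omega>))"
    by (intro rvar_vnorm_le_vvar_sort_vec) auto
next
  show "gauss_norm_var n = real n - 2 * (Gamma ((real n + 1) / 2) / Gamma (real n / 2))\<^sup>2"
    if "n \<ge> 1" for n
    using that by (rule gauss_norm_var_eq)
next
  show "gauss_norm_var n \<le> gauss_norm_var (Suc n)" if "n \<ge> 1" for n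
    using that gamma_ratio_defect_Suc_le[OF that]
    by (simp add: gauss_norm_var_eq_gamma_ratio_defect)
next
  have "(\<lambda>n. 1/2 - 2 * gamma_ratio_defect n) \<longlonglongrightarrow> 1/2 - 2 * 0"
    by (intro tendsto_intros gamma_ratio_defect_tendsto_0)
  moreover have "\<forall>\<^sub>F n in sequentially. 1/2 - 2 * gamma_ratio_defect n = gauss_norm_var n"
    using eventually_ge_at_top[of 1] by eventually_elim (simp add: gauss_norm_var_eq_gamma_ratio_defect)
  ultimately show "gauss_norm_var \<longlonglongrightarrow> 1 / 2"
    by (simp add: Lim_transform_eventually)
qed

end
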